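(* Let $J$ be a simple current of $\mathcal{A}$, $\psi,\chi,\chi'\in\{0,1\}$ and $i,i'\in I$. Then the fusion coefficient of $\mathcal{A}_{\rm perm}$ satisfies $$N_{(J,\psi)(i,\chi)}^{\phantom{(J,\psi)(i,\chi)}(i',\chi')}=\tfrac12\,N_{Ji}^{\ \ i'}\Big(N_{Ji}^{\ \ i'}+e^{i\pi(\psi+\chi-\chi')}\Big),$$ where $N_{Ji}^{\ \ i'}$ are the fusion coefficients of $\mathcal{A}$. Consequently a diagonal field $(i,\chi)$ is a fixed point of $(J,\psi)$ (i.e. $N_{(J,\psi)(i,\chi)}^{\phantom{(J,\psi)(i,\chi)}(i,\chi)}=1$) if and only if $\psi=0$ and $Ji=i$.
   Context: Let $\mathcal{A}$ be a unitary rational conformal field theory with finite set of primary fields $I$, identity $0\in I$, central charge $c$, conformal weights $h_i$, and modular matrices $S$ (symmetric, unitary, with $S_{0i}\ge S_{00}>0$) and $T=\mathrm{diag}(e^{2\pi i(h_i-c/24)})$; put $P=T^{1/2}ST^{2}ST^{1/2}$. Fusion coefficients of $\mathcal{A}$ are $N_{ij}^{\ \ k}=\sum_{m\in I}S_{im}S_{jm}\overline{S_{km}}/S_{0m}$ (non-negative integers). A simple current $J$ of $\mathcal{A}$ is a field with $S_{J0}=S_{00}$; for each $i$ there is then a unique field $Ji$ with $N_{Ji}^{\ \ k}=\delta_{k,Ji}$. The $\mathbb{Z}_2$ permutation orbifold $\mathcal{A}_{\rm perm}$ has primaries: diagonal $(i,\psi)$ ($i\in I$, $\psi\in\{0,1\}$),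 off-diagonal $\langle i,j\rangle$ (unordered pairs $i\neq j$), twisted $\widehat{(i,\psi)}$; identity $(0,0)$; modular matrix $S^{BHS}$ given by $S^{BHS}_{\langle i,j\rangle\langle p,q\rangle}=S_{ip}S_{jq}+S_{iq}S_{jp}$, $S^{BHS}_{\langle i,j\rangle(p,\psi)}=S_{ip}S_{jp}$, $S^{BHS}_{\langle i,j\rangle\widehat{(p,\psi)}}=0$, $S^{BHS}_{(i,\psi)(j,\chi)}=\tfrac12 S_{ij}^2$, $S^{BHS}_{(i,\psi)\widehat{(p,\chi)}}=\tfrac12 e^{i\pi\psi}S_{ip}$, $S^{BHS}_{\widehat{(p,\psi)}\widehat{(q,\chi)}}=\tfrac12 e^{i\pi(\psi+\chi)}P_{pq}$ (and symmetric). Fusion coefficients of $\mathcal{A}_{\rm perm}$ are defined by the Verlinde formula $N_{AB}^{\ \ C}=\sum_{N}S^{BHS}_{AN}S^{BHS}_{BN}\overline{S^{BHS}_{CN}}/S^{BHS}_{(0,0)N}$, the sum running over all primaries $N$ of $\mathcal{A}_{\rm perm}$. *)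

theory Defs
  imports Complex_Main "HOL-Library.FuncSet"
begin

text \<open>Primary fields of the Z2 permutation orbifold.  Diag i psi with psi in {0,1};
Off A with A a two-element subset {i,j} of primaries (unordered pair i /= j);
Tw p psi the twisted fields.\<close>

datatype 'i perm_prim = Diag 'i nat | Off "'i set" | Tw 'i nat

definition perm_prims :: "('i::finite) perm_prim set" where
  "perm_prims = {Diag i psi | i psi. psi \<in> {0,1}} \<union> {Off A | A. card A = 2}
               \<union> {Tw p psi | p psi. psi \<in> {0,1}}"

definition fus :: "('i::finite \<Rightarrow> 'i \<Rightarrow> complex) \<Rightarrow> 'i \<Rightarrow> 'i \<Rightarrow> 'i \<Rightarrow> 'i \<Rightarrow> complex" where
  "fus S z i j k = (\<Sum>m\<in>UNIV. S i m * S j m * cnj (S k m) / S z m)"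

text \<open>T^(1/2) entries and P = T^(1/2) S T^2 S T^(1/2).\<close>
definition Thalf :: "real \<Rightarrow> ('i \<Rightarrow> real) \<Rightarrow> 'i \<Rightarrow> complex" where
  "Thalf c h i = exp (\<i> * of_real pi * of_real (h i - c / 24))"

definition Pmat :: "('i::finite \<Rightarrow> 'i \<Rightarrow> complex) \<Rightarrow> real \<Rightarrow> ('i \<Rightarrow> real) \<Rightarrow> 'i \<Rightarrow> 'i \<Rightarrow> complex" where
  "Pmat S c h p q = Thalf c h p * (\<Sum>m\<in>UNIV. S p m * (Thalf c h m)^4 * S m q) * Thalf c h q"

definition sgnph :: "nat \<Rightarrow> complex" where
  "sgnph n = exp (\<i> * of_real pi * of_nat n)"

text \<open>Modular S-matrix of the permutation orbifold (BHS).\<close>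
fun SBHS :: "('i::finite \<Rightarrow> 'i \<Rightarrow> complex) \<Rightarrow> real \<Rightarrow> ('i \<Rightarrow> real) \<Rightarrow>
    'i perm_prim \<Rightarrow> 'i perm_prim \<Rightarrow> complex" where
  "SBHS S c h (Off A) (Off B) = (\<Sum>f\<in>{f \<in> A \<rightarrow>\<^sub>E B. bij_betw f A B}. \<Prod>x\<in>A. S x (f x))"
| "SBHS S c h (Off A) (Diag p psi) = (\<Prod>x\<in>A. S x p)"
| "SBHS S c h (Diag p psi) (Off A) = (\<Prod>x\<in>A. S x p)"
| "SBHS S c h (Off A) (Tw p psi) = 0"
| "SBHS S c h (Tw p psi) (Off A) = 0"
| "SBHS S c h (Diag i psi) (Diag j chi) = (1/2) * (S i j)^2"
| "SBHS S c h (Diag i psi) (Tw p chi) = (1/2) * sgnph psi * S i p"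
| "SBHS S c h (Tw p chi) (Diag i psi) = (1/2) * sgnph psi * S i p"
| "SBHS S c h (Tw p psi) (Tw q chi) = (1/2) * sgnph (psi + chi) * Pmat S c h p q"

definition fus_perm :: "('i::finite \<Rightarrow> 'i \<Rightarrow> complex) \<Rightarrow> real \<Rightarrow> ('i \<Rightarrow> real) \<Rightarrow> 'i \<Rightarrow>
    'i perm_prim \<Rightarrow> 'i perm_prim \<Rightarrow> 'i perm_prim \<Rightarrow> complex" where
  "fus_perm S c h z A B C = (\<Sum>N\<in>perm_prims.
      SBHS S c h A N * SBHS S c h B N * cnj (SBHS S c h C N) / SBHS S c h (Diag z 0) N)"

definition sc_act :: "('i::finite \<Rightarrow> 'i \<Rightarrow> complex) \<Rightarrow> 'i \<Rightarrow> 'i \<Rightarrow> 'i \<Rightarrow> 'i" where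
  "sc_act S z J i = (THE k. \<forall>k'. fus S z J i k' = (if k' = k then 1 else 0))"

end

theory Submission imports Defs begin

(* In the Verlinde sum defining the fusion coefficient
   N_{(J,psi)(i,chi)}^{(i',chi')} of the permutation orbifold, put
   a(m) = S_{Jm} S_{im} conj(S_{i'm}) / S_{0m}, so that N_{Ji}^{i'} = sum_m a(m).
   The primaries split into three families and each contributes a simple term:
   the diagonal fields give (sum_m a(m)^2)/2, the twisted fields give
   (-1)^(psi+chi+chi') (sum_m a(m))/2, and the off-diagonal fields give the
   sum of a(p) a(q) over unordered pairs p /= q, i.e.
   ((sum_m a(m))^2 - sum_m a(m)^2)/2.  Adding up, the squares cancel and
   N = 1/2 N_{Ji}^{i'} (N_{Ji}^{i'} + (-1)^(psi+chi+chi')). *)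

lemma sum_two_subsets_prod:
  fixes a :: "'i::finite \<Rightarrow> 'a::field_char_0"
  shows "(\<Sum>A\<in>{A. card A = 2}. \<Prod>x\<in>A. a x) = ((\<Sum>p\<in>UNIV. a p)^2 - (\<Sum>p\<in>UNIV. (a p)^2)) / 2"
proof -
  let ?P = "{(p,q). (p::'i) \<noteq> q}"
  have square: "(\<Sum>p\<in>UNIV. a p)^2 = (\<Sum>p\<in>UNIV. (a p)^2) + (\<Sum>(p,q)\<in>?P. a p * a q)"
  proof -
    have "(\<Sum>p\<in>UNIV. a p)^2 = (\<Sum>(p,q)\<in>UNIV\<times>UNIV. a p * a q)"
      by (simp add: power2_eq_square sum_product sum.cartesian_product)
    also have "UNIV \<times> UNIV = (\<lambda>p. (p,p)) ` UNIV \<union> ?P" by auto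
    also have "(\<Sum>(p,q)\<in>(\<lambda>p. (p,p)) ` UNIV \<union> ?P. a p * a q)
        = (\<Sum>(p,q)\<in>(\<lambda>p. (p,p)) ` UNIV. a p * a q) + (\<Sum>(p,q)\<in>?P. a p * a q)"
      by (rule sum.union_disjoint) auto
    also have "(\<Sum>(p,q)\<in>(\<lambda>p. (p,p)) ` UNIV. a p * a q) = (\<Sum>p\<in>UNIV. (a p)^2)"
      by (subst sum.reindex) (auto simp: inj_on_def power2_eq_square)
    finally show ?thesis .
  qed
  text \<open>Each unordered pair {p,q} arises from exactly the two ordered pairs (p,q), (q,p).\<close>
  have "(\<Sum>(p,q)\<in>?P. a p * a q)
      = (\<Sum>A\<in>{A. card A = 2}. \<Sum>pq\<in>{pq \<in> ?P. (\<lambda>(p,q). {p,q}) pq = A}. (\<lambda>(p,q). a p * a q) pq)"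
    by (rule sum.group[symmetric]) (auto simp: card_2_iff)
  also have "\<dots> = (\<Sum>A\<in>{A. card A = 2}. 2 * (\<Prod>x\<in>A. a x))"
  proof (rule sum.cong[OF refl])
    fix A :: "'i set" assume "A \<in> {A. card A = 2}"
    then obtain p q where pq: "p \<noteq> q" "A = {p,q}" by (auto simp: card_2_iff)
    then have "{pq \<in> ?P. (\<lambda>(p,q). {p,q}) pq = A} = {(p,q),(q,p)}"
      by (auto simp: doubleton_eq_iff)
    with pq show "(\<Sum>pq\<in>{pq \<in> ?P. (\<lambda>(p,q). {p,q}) pq = A}. (\<lambda>(p,q). a p * a q) pq)
        = 2 * (\<Prod>x\<in>A. a x)"
      by (simp add: mult.commute)
  qed
  finally show ?thesis using square by (simp add: sum_distrib_left[symmetric])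
qed

lemma sum_perm_prims:
  fixes F :: "('i::finite) perm_prim \<Rightarrow> 'a::comm_monoid_add"
  shows "sum F perm_prims = (\<Sum>p\<in>UNIV. F (Diag p 0) + F (Diag p 1))
           + (\<Sum>A\<in>{A. card A = 2}. F (Off A)) + (\<Sum>p\<in>UNIV. F (Tw p 0) + F (Tw p 1))"
proof -
  let ?D = "(\<lambda>(p,w). Diag p w) ` (UNIV \<times> {0::nat,1})"
  let ?O = "Off ` {A::'i set. card A = 2}"
  let ?T = "(\<lambda>(p,w). Tw p w) ` (UNIV \<times> {0::nat,1})"
  have "perm_prims = ?D \<union> ?O \<union> ?T" unfolding perm_prims_def by auto
  also have "sum F (?D \<union> ?O \<union> ?T) = sum F ?D + sum F ?O + sum F ?T"
    by (subst sum.union_disjoint; (auto)?; subst sum.union_disjoint; auto)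
  also have "sum F ?D = (\<Sum>(p,w)\<in>UNIV \<times> {0::nat,1}. F (Diag p w))"
    by (subst sum.reindex) (auto simp: inj_on_def case_prod_unfold)
  also have "\<dots> = (\<Sum>p\<in>UNIV. \<Sum>w\<in>{0::nat,1}. F (Diag p w))"
    by (rule sum.cartesian_product[symmetric])
  also have "sum F ?O = (\<Sum>A\<in>{A. card A = 2}. F (Off A))"
    by (simp add: sum.reindex inj_on_def)
  also have "sum F ?T = (\<Sum>(p,w)\<in>UNIV \<times> {0::nat,1}. F (Tw p w))"
    by (subst sum.reindex) (auto simp: inj_on_def case_prod_unfold)
  also have "\<dots> = (\<Sum>p\<in>UNIV. \<Sum>w\<in>{0::nat,1}. F (Tw p w))"
    by (rule sum.cartesian_product[symmetric])
  finally show ?thesis by (simp add: sum.distrib)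
qed

lemma sgnph_eq: "sgnph n = (-1)^n"
  unfolding sgnph_def
  by (metis exp_of_nat_mult exp_pi_i' mult.commute mult.left_commute of_real_of_nat_eq)

lemma exp_i_pi_sign:
  "exp (\<i> * of_real pi * (of_nat a + of_nat b - of_nat c)) = ((-1)^(a + b + c) :: complex)"
proof -
  have "exp (\<i> * of_real pi * (of_nat a + of_nat b - of_nat c)) = sgnph a * sgnph b / sgnph c"
    unfolding sgnph_def by (simp add: ring_distribs exp_diff exp_add)
  also have "\<dots> = (-1)^(a + b + c)"
    by (simp add: sgnph_eq power_add divide_inverse flip: power_inverse)
  finally show ?thesis .
qed

lemma fus_perm_diag_diag:
  fixes S :: "'i::finite \<Rightarrow> 'i \<Rightarrow> complex"
  assumes sym: "\<And>a b. S a b = S b a"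
    and nz: "\<And>a. S z a \<noteq> 0"
  shows "fus_perm S c h z (Diag j psi) (Diag i chi) (Diag i' chi')
           = (1/2) * fus S z j i i' * (fus S z j i i' + (-1)^(psi + chi + chi'))"
proof -
  define a where "a m = S j m * S i m * cnj (S i' m) / S z m" for m
  define e where "e = sgnph psi * sgnph chi * cnj (sgnph chi')"
  define F where "F N = SBHS S c h (Diag j psi) N * SBHS S c h (Diag i chi) N
      * cnj (SBHS S c h (Diag i' chi') N) / SBHS S c h (Diag z 0) N" for N
  have diag: "F (Diag p w) = (a p)^2 / 4" for p w
    using nz[of p] by (simp add: F_def a_def field_simps sym[of z p] power2_eq_square)
  have twisted: "F (Tw p w) = e * a p / 4" for p w
    using nz[of p] by (simp add: F_def a_def e_def field_simps sgnph_def)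
  have off: "F (Off A) = (\<Prod>x\<in>A. a x)" for A
    by (simp add: F_def a_def prod.distrib prod_dividef sym)
  have "fus_perm S c h z (Diag j psi) (Diag i chi) (Diag i' chi') = sum F perm_prims"
    unfolding fus_perm_def F_def ..
  also have "\<dots> = (\<Sum>p\<in>UNIV. (a p)^2) / 2 + (\<Sum>A\<in>{A. card A = 2}. \<Prod>x\<in>A. a x)
                 + e * (\<Sum>p\<in>UNIV. a p) / 2"
    unfolding sum_perm_prims diag twisted off
    by (simp add: sum_divide_distrib sum_distrib_left)
  also have "\<dots> = (1/2) * sum a UNIV * (sum a UNIV + e)"
    unfolding sum_two_subsets_prod by (simp add: field_simps power2_eq_square)
  also have "sum a UNIV = fus S z j i i'"
    unfolding fus_def a_def ..
  also have "e = (-1)^(psi + chi + chi')"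
    by (simp add: e_def sgnph_eq power_add)
  finally show ?thesis .
qed

lemma sc_act_eqI:
  assumes "\<forall>k'. fus S z J i k' = (if k' = k then 1 else 0)"
  shows "sc_act S z J i = k"
  unfolding sc_act_def
proof (rule the_equality)
  fix k2 assume "\<forall>k'. fus S z J i k' = (if k' = k2 then 1 else 0)"
  from this[rule_format, of k] assms[rule_format, of k] show "k2 = k"
    by (auto split: if_splits)
qed (fact assms)

lemma half_indicator_eq_one:
  fixes n :: complex
  assumes "n \<in> {0,1}" and "psi \<in> {0::nat,1}"
  shows "(1/2) * n * (n + (-1)^psi) = 1 \<longleftrightarrow> n = 1 \<and> psi = 0"
  using assms by auto

theorem mainTheorem2:
  fixes S :: "'i::finite \<Rightarrow> 'i \<Rightarrow> complex" and z :: 'i and c :: real and h :: "'i \<Rightarrow> real"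
    and J i i' :: 'i and psi chi chi' :: nat
  assumes sym: "\<And>a b. S a b = S b a"
    and unitary: "\<And>a b. (\<Sum>m\<in>UNIV. S a m * cnj (S b m)) = (if a = b then 1 else 0)"
    and S0real: "\<And>a. Im (S z a) = 0"
    and S0pos: "Re (S z z) > 0"
    and S0ge: "\<And>a. Re (S z a) \<ge> Re (S z z)"
    and fus_nat: "\<And>a b k. fus S z a b k \<in> \<nat>"
    and simple: "S J z = S z z"
    and simple_act: "\<And>a. \<exists>k. \<forall>k'. fus S z J a k' = (if k' = k then 1 else 0)"
    and psi: "psi \<in> {0,1}" and chi: "chi \<in> {0,1}" and chi': "chi' \<in> {0,1}"
  shows "fus_perm S c h z (Diag J psi) (Diag i chi) (Diag i' chi')
           = (1/2) * fus S z J i i' *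
             (fus S z J i i' + exp (\<i> * of_real pi * (of_nat psi + of_nat chi - of_nat chi'))) \<and>
         (fus_perm S c h z (Diag J psi) (Diag i chi) (Diag i chi) = 1
           \<longleftrightarrow> psi = 0 \<and> sc_act S z J i = i)"
proof -
  have nz: "S z a \<noteq> 0" for a
  proof
    assume "S z a = 0"
    with S0ge[of a] S0pos show False by simp
  qed
  note fusion = fus_perm_diag_diag[of S z, OF sym nz]
  obtain k where k: "\<forall>k'. fus S z J i k' = (if k' = k then 1 else 0)"
    using simple_act by blast
  have "(-1::complex)^(psi + chi + chi) = (-1)^psi"
    by (simp add: power_add power_mult_distrib flip: mult_2 power_mult)
  then have "fus_perm S c h z (Diag J psi) (Diag i chi) (Diag i chi)
      = (1/2) * fus S z J i i * (fus S z J i i + (-1)^psi)"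
    using fusion by simp
  moreover have "fus S z J i i \<in> {0,1}" using k by simp
  ultimately have "fus_perm S c h z (Diag J psi) (Diag i chi) (Diag i chi) = 1
      \<longleftrightarrow> fus S z J i i = 1 \<and> psi = 0"
    using half_indicator_eq_one[OF _ psi] by presburger
  also have "\<dots> \<longleftrightarrow> psi = 0 \<and> sc_act S z J i = i"
    using k sc_act_eqI[OF k] by auto
  finally show ?thesis
    by (simp only: fusion exp_i_pi_sign)
qed

end
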